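(* For every $T>0$, $\lambda>0$ and $\epsilon>0$ there is $M=M(T,\lambda,\epsilon)$ such that $$\liminf_{m\to\infty}\mathbb{P}^{(m)}_\sigma\big(\Lambda(T,M,\lambda)\big)>1-\epsilon.$$
   Context: Fix a real exponent $b>0$ and a sequence $\sigma=(\sigma_p)_{p\in\mathcal P}$ of nonnegative reals indexed by the set $\mathcal P$ of primes with $\sum_p\sigma_p<\infty$. For a prime $p$, $\mathbb{Q}_p$ denotes the $p$-adic numbers with absolute value $|\cdot|_p$ and $\mathbb{Z}_p$ its closed unit ball. Let $G_p\subset\mathbb{Q}_p$ be the set of $p$-adic numbers of the form $\sum_{k<0}a_kp^k$ with $a_k\in\{0,\dots,p-1\}$, only finitely many nonzero; $G_p$ is a set of representatives of $\mathbb{Q}_p/\mathbb{Z}_p$ and is given the group structure of $\mathbb{Q}_p/\mathbb{Z}_p$. Let $X^{(p)}$ be a $G_p$-valued random variable with $\Pr(|X^{(p)}|_p=p^k)=(p^b-1)p^{-kb}$ for every integer $k\ge1$, and, conditionally on $|X^{(p)}|_p=p^k$, uniformly distributed on the finite set $\{x\in G_p:|x|_p=p^k\}$. Let $X^{(p)}_1,X^{(p)}_2,\dots$ be i.i.d. copies of $X^{(p)}$ and $S^{(p)}_n=X^{(p)}_1+\dots+X^{(p)}_n$ (sum in the group $G_p$), $S^{(p)}_0=0$. Put $D_p=\frac{p^b(p-1)}{p^{b+1}-1}\sigma_p$. For an integer $m\ge0$, let $\mathbb{P}^{(m)}_p$ be the law on $D(\mathbb{Q}_p)$ (càdlàg paths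 $[0,\infty)\to\mathbb{Q}_p$) of $t\mapsto p^mS^{(p)}_{\lfloor D_pp^{mb}t\rfloor}$, and $\mathbb{P}^{(m)}_\sigma=\prod_{p}\mathbb{P}^{(m)}_p$ the product measure on $\prod_pD(\mathbb{Q}_p)$ (independent components). For $x=(x_p)_p\in\prod_pD(\mathbb{Q}_p)$, $T>0$, $M>0$, $\lambda>0$, define the event $\Lambda(T,M,\lambda)=\{x:\ \sup_{s\le T}|x_p(s)|_p/p<\lambda\text{ for all primes }p\ge M\}$. *)

theory Defs
  imports "HOL-Probability.Probability" "HOL-Computational_Algebra.Primes"
begin

text \<open>p-adic absolute value of a rational number (the rationals embed isometrically in Q_p).
  For x = a/d in lowest terms, |x|_p = p^(v_p(d) - v_p(a)), and |0|_p = 0.\<close>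
definition padic_norm :: "nat \<Rightarrow> rat \<Rightarrow> real" where
  "padic_norm p x =
     (if x = 0 then 0
      else (let (a, d) = quotient_of x in
            real p powr (real (multiplicity (int p) d) - real (multiplicity (int p) a))))"

text \<open>G_p: p-adic numbers of the form sum_{k<0} a_k p^k with finitely many nonzero digits.
  As rationals these are exactly the numbers in [0,1) whose denominator is a power of p.\<close>
definition Gp :: "nat \<Rightarrow> rat set" where
  "Gp p = {x. 0 \<le> x \<and> x < 1 \<and> (\<exists>n::nat. x * of_nat p ^ n \<in> \<int>)}"

text \<open>The group law of G_p (that of Q_p/Z_p on these representatives) is addition mod 1;
  hence S_n = X_1 + ... + X_n computed in G_p is the fractional part of the ordinary sum.\<close>
definition walk :: "(nat \<Rightarrow> 'w \<Rightarrow> rat) \<Rightarrow> nat \<Rightarrow> 'w \<Rightarrow> rat" where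
  "walk X n \<omega> = frac (\<Sum>i\<in>{1..n}. X i \<omega>)"

definition Dconst :: "real \<Rightarrow> (nat \<Rightarrow> real) \<Rightarrow> nat \<Rightarrow> real" where
  "Dconst b \<sigma> p = real p powr b * (real p - 1) / (real p powr (b + 1) - 1) * \<sigma> p"

definition scaled_path ::
  "real \<Rightarrow> (nat \<Rightarrow> real) \<Rightarrow> (nat \<Rightarrow> nat \<Rightarrow> 'w \<Rightarrow> rat) \<Rightarrow> nat \<Rightarrow> 'w \<Rightarrow> nat \<Rightarrow> real \<Rightarrow> rat" where
  "scaled_path b \<sigma> X m \<omega> p t =
     of_nat p ^ m * walk (X p) (nat \<lfloor>Dconst b \<sigma> p * real p powr (real m * b) * t\<rfloor>) \<omega>"

definition Lambda_event :: "real \<Rightarrow> nat \<Rightarrow> real \<Rightarrow> (nat \<Rightarrow> real \<Rightarrow> rat) \<Rightarrow> bool" where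
  "Lambda_event T M lam x \<longleftrightarrow>
     (\<forall>p. prime p \<and> p \<ge> M \<longrightarrow>
        (SUP s\<in>{0..T}. padic_norm p (x p s)) / real p < lam)"

end

theory Submission
  imports Defs
begin

(* A union bound over primes p >= M and over the first N_p = floor(D_p p^(m b) T) steps of the
   p-th walk.  If none of these steps has |X|_p > p^m, then every p^m S_n with n <= N_p lies in Z_p
   (reduction mod 1 only subtracts integers), so the supremum in Lambda is at most 1/p < lambda once
   M > 1/lambda.  A step exceeds p^m with probability p^(-m b), so the p-th walk misbehaves with
   probability at most N_p p^(-m b) <= D_p T <= sigma_p T, uniformly in m; choosing M with
   T * sum_(p >= M) sigma_p < epsilon/2 finishes the proof. *)

definition padic_integers :: "nat \<Rightarrow> rat set" where
  "padic_integers p = {x. \<exists>a d::int. d > 0 \<and> \<not> int p dvd d \<and> x = of_int a / of_int d}"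

lemma of_int_in_padic_integers: "p \<noteq> 1 \<Longrightarrow> of_int a \<in> padic_integers p"
  unfolding padic_integers_def by (intro CollectI exI[of _ a] exI[of _ 1]) auto

lemma padic_integers_add:
  assumes "prime p" "x \<in> padic_integers p" "y \<in> padic_integers p"
  shows "x + y \<in> padic_integers p"
proof -
  from assms obtain a d c e where "d > 0" "\<not> int p dvd d" "x = of_int a / of_int d"
    "e > 0" "\<not> int p dvd e" "y = of_int c / of_int e"
    unfolding padic_integers_def by auto
  moreover have "prime (int p)" using assms by simp
  ultimately have "\<not> int p dvd d * e" by (simp add: prime_dvd_mult_iff)
  moreover have "x + y = of_int (a * e + c * d) / of_int (d * e)"
    using \<open>d > 0\<close> \<open>e > 0\<close> \<open>x = _\<close> \<open>y = _\<close> by (simp add: field_simps)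
  ultimately show ?thesis
    unfolding padic_integers_def using \<open>d > 0\<close> \<open>e > 0\<close>
    by (intro CollectI exI[of _ "a * e + c * d"] exI[of _ "d * e"]) auto
qed

lemma padic_integers_uminus:
  assumes "x \<in> padic_integers p"
  shows "- x \<in> padic_integers p"
proof -
  from assms obtain a d where "d > 0" "\<not> int p dvd d" "x = of_int a / of_int d"
    unfolding padic_integers_def by auto
  then show ?thesis
    unfolding padic_integers_def by (intro CollectI exI[of _ "- a"] exI[of _ d]) auto
qed

lemma padic_integers_sum:
  assumes "prime p" "\<And>i. i \<in> I \<Longrightarrow> f i \<in> padic_integers p"
  shows "sum f I \<in> padic_integers p"
  using assms(2)
proof (induction I rule: infinite_finite_induct)
  case (insert i I)
  then show ?case using padic_integers_add[OF assms(1)] by simp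
qed (use of_int_in_padic_integers[of p 0] prime_gt_1_nat[OF assms(1)] in auto)

lemma padic_norm_le_one:
  assumes p: "prime p" and x: "x \<in> padic_integers p"
  shows "padic_norm p x \<le> 1"
proof (cases "x = 0")
  case False
  from x obtain a d where d: "d > 0" "\<not> int p dvd d" "x = of_int a / of_int d"
    unfolding padic_integers_def by auto
  obtain a' d' where q: "quotient_of x = (a', d')" by fastforce
  have "x = of_int a' / of_int d'" "d' > 0" "coprime a' d'"
    using quotient_of_div[OF q] quotient_of_denom_pos[OF q] quotient_of_coprime[OF q] by auto
  with d have "of_int a' / of_int d' = (of_int a / of_int d :: rat)" by simp
  then have "a' * d = a * d'"
    using \<open>d > 0\<close> \<open>d' > 0\<close> by (simp add: field_simps) (metis of_int_eq_iff of_int_mult)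
  then have "d' dvd a' * d" by (metis dvd_triv_right)
  then have "d' dvd d"
    using \<open>coprime a' d'\<close> by (metis coprime_commute coprime_dvd_mult_right_iff)
  then have "\<not> int p dvd d'" using d(2) dvd_trans by blast
  then have "multiplicity (int p) d' = 0" by (rule not_dvd_imp_multiplicity_0)
  then have "padic_norm p x = real p powr (- real (multiplicity (int p) a'))"
    using False q by (simp add: padic_norm_def)
  also have "\<dots> \<le> real p powr 0"
    using p prime_ge_1_nat by (intro powr_mono) auto
  finally show ?thesis using p prime_gt_0_nat by fastforce
qed (simp add: padic_norm_def)

lemma power_mult_in_padic_integers:
  assumes p: "prime p" and x: "padic_norm p x \<le> real p ^ m"
  shows "of_nat p ^ m * x \<in> padic_integers p"
proof (cases "x = 0")
  case True
  then show ?thesis using of_int_in_padic_integers[of p 0] prime_gt_1_nat[OF p] by auto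
next
  assume "x \<noteq> 0"
  obtain a d where q: "quotient_of x = (a, d)" by fastforce
  have x_eq: "x = of_int a / of_int d" and "d > 0" and "coprime a d"
    using quotient_of_div[OF q] quotient_of_denom_pos[OF q] quotient_of_coprime[OF q] by auto
  have pp: "prime (int p)" using p by simp
  define v where "v = multiplicity (int p) d"
  obtain d' where d': "d = int p ^ v * d'" "\<not> int p dvd d'"
    using multiplicity_decompose'[of d "int p"] \<open>d > 0\<close> pp unfolding v_def
    by (metis less_irrefl not_prime_unit)
  have "d' > 0" using \<open>d > 0\<close> d'(1) p prime_gt_0_nat
    by (metis of_nat_0_less_iff zero_less_mult_pos zero_less_power)
  have "v \<le> m"
  proof (cases "v = 0")
    case False
    then have "int p dvd d" unfolding v_def by (metis not_dvd_imp_multiplicity_0)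
    then have "\<not> int p dvd a"
      using \<open>coprime a d\<close> pp by (metis coprime_common_divisor not_prime_unit)
    then have "padic_norm p x = real p ^ v"
      using \<open>x \<noteq> 0\<close> q p prime_gt_0_nat
      by (simp add: padic_norm_def v_def not_dvd_imp_multiplicity_0 powr_realpow)
    then show ?thesis using x p prime_gt_1_nat
      by (metis of_nat_1 of_nat_less_iff power_le_imp_le_exp)
  qed simp
  then have "(of_nat p :: rat) ^ m = of_nat p ^ (m - v) * of_nat p ^ v"
    by (metis le_add_diff_inverse2 power_add)
  then have "of_nat p ^ m * x = of_int (int p ^ (m - v) * a) / of_int d'"
    using x_eq d'(1) p prime_gt_0_nat \<open>d' > 0\<close> by (simp add: field_simps)
  then show ?thesis unfolding padic_integers_def using \<open>d' > 0\<close> d'(2) by blast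
qed

lemma walk_cong:
  "(\<And>i. i \<in> {1..n} \<Longrightarrow> Y i \<omega> = Y' i \<omega>') \<Longrightarrow> walk Y n \<omega> = walk Y' n \<omega>'"
  unfolding walk_def by (intro arg_cong[where f = frac] sum.cong) auto

lemma padic_norm_scaled_walk_le_one:
  assumes p: "prime p" and steps: "\<And>i. i \<in> {1..n} \<Longrightarrow> padic_norm p (Y i \<omega>) \<le> real p ^ m"
  shows "padic_norm p (of_nat p ^ m * walk Y n \<omega>) \<le> 1"
proof -
  define S where "S = (\<Sum>i\<in>{1..n}. Y i \<omega>)"
  have "of_nat p ^ m * S = (\<Sum>i\<in>{1..n}. of_nat p ^ m * Y i \<omega>)"
    unfolding S_def by (simp add: sum_distrib_left)
  also have "\<dots> \<in> padic_integers p"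
    using p steps power_mult_in_padic_integers by (intro padic_integers_sum) auto
  finally have "of_nat p ^ m * S + - of_int (int p ^ m * \<lfloor>S\<rfloor>) \<in> padic_integers p"
    using p prime_gt_1_nat
    by (intro padic_integers_add padic_integers_uminus of_int_in_padic_integers) auto
  also have "of_nat p ^ m * S + - of_int (int p ^ m * \<lfloor>S\<rfloor>) = of_nat p ^ m * walk Y n \<omega>"
    unfolding walk_def S_def frac_def by (simp add: algebra_simps)
  finally show ?thesis using padic_norm_le_one[OF p] by blast
qed

lemma Dconst_bounds:
  assumes p: "1 < p" and b: "0 \<le> b" and \<sigma>: "0 \<le> \<sigma> p"
  shows "0 \<le> Dconst b \<sigma> p" and "Dconst b \<sigma> p \<le> \<sigma> p"
proof -
  have p1: "1 < real p" using p by simp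
  have pb: "1 \<le> real p powr b" using p1 b by (simp add: ge_one_powr_ge_zero)
  have split: "real p powr (b + 1) = real p powr b * real p" using p1 by (simp add: powr_add)
  have "real p \<le> real p powr b * real p" using pb p1 by simp
  then have den: "0 < real p powr (b + 1) - 1" using split p1 by linarith
  have num: "real p powr b * (real p - 1) \<le> real p powr (b + 1) - 1"
    using split pb by (simp add: algebra_simps)
  define c where "c = real p powr b * (real p - 1) / (real p powr (b + 1) - 1)"
  have "0 \<le> c" "c \<le> 1" unfolding c_def using den num p1 by simp_all
  moreover have "Dconst b \<sigma> p = c * \<sigma> p" unfolding Dconst_def c_def ..
  ultimately show "0 \<le> Dconst b \<sigma> p" and "Dconst b \<sigma> p \<le> \<sigma> p"
    using \<sigma> mult_left_le_one_le by simp_all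
qed

definition step_count :: "real \<Rightarrow> (nat \<Rightarrow> real) \<Rightarrow> nat \<Rightarrow> nat \<Rightarrow> real \<Rightarrow> nat" where
  "step_count b \<sigma> m p t = nat \<lfloor>Dconst b \<sigma> p * real p powr (real m * b) * t\<rfloor>"

lemma scaled_path_eq_walk:
  "scaled_path b \<sigma> X m \<omega> p t = of_nat p ^ m * walk (X p) (step_count b \<sigma> m p t) \<omega>"
  unfolding scaled_path_def step_count_def ..

lemma step_count_mono:
  "0 \<le> Dconst b \<sigma> p \<Longrightarrow> s \<le> t \<Longrightarrow> step_count b \<sigma> m p s \<le> step_count b \<sigma> m p t"
  unfolding step_count_def by (intro nat_mono floor_mono mult_left_mono) auto

lemma sum_powr_telescope:
  fixes q b :: real assumes "0 < q"
  shows "(\<Sum>k\<in>{1..m}. (q powr b - 1) * q powr (- real k * b)) = 1 - q powr (- real m * b)"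
proof (induction m)
  case (Suc m)
  have "q powr b * q powr (- real (Suc m) * b) = q powr (- real m * b)"
    by (simp add: powr_add[symmetric] algebra_simps)
  with Suc show ?case by (simp add: algebra_simps)
qed (use assms in simp)

lemma (in prob_space) prob_exceeds_power_le:
  fixes Z :: "'a \<Rightarrow> real" and q b :: real
  assumes Z: "Z \<in> borel_measurable M" and q: "1 < q"
    and law: "\<And>k. 1 \<le> k \<Longrightarrow>
      prob {\<omega> \<in> space M. Z \<omega> = q ^ k} = (q powr b - 1) * q powr (- real k * b)"
  shows "prob {\<omega> \<in> space M. q ^ m < Z \<omega>} \<le> q powr (- real m * b)"
proof -
  define E where "E k = {\<omega> \<in> space M. Z \<omega> = q ^ k}" for k
  have E_events: "E k \<in> events" for k unfolding E_def using Z by simp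
  have "disjoint_family_on E {1..m}"
    unfolding disjoint_family_on_def
  proof (intro ballI impI)
    fix k l :: nat assume "k \<noteq> l"
    then have "q ^ k \<noteq> q ^ l" using q by (simp add: power_inject_exp)
    then show "E k \<inter> E l = {}" unfolding E_def by auto
  qed
  then have "prob (\<Union>k\<in>{1..m}. E k) = (\<Sum>k\<in>{1..m}. prob (E k))"
    using E_events by (intro finite_measure_finite_Union) auto
  also have "\<dots> = 1 - q powr (- real m * b)"
    using law sum_powr_telescope[of q b m] q by (simp add: E_def)
  finally have "prob (space M - (\<Union>k\<in>{1..m}. E k)) = q powr (- real m * b)"
    using E_events by (subst prob_compl) auto
  moreover have "{\<omega> \<in> space M. q ^ m < Z \<omega>} \<subseteq> space M - (\<Union>k\<in>{1..m}. E k)"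
  proof safe
    fix \<omega> k assume "q ^ m < Z \<omega>" "k \<in> {1..m}" "\<omega> \<in> E k"
    then have "q ^ m < q ^ k" "k \<le> m" by (auto simp: E_def)
    then show False using q power_increasing[of k m q] by simp
  qed
  then have "prob {\<omega> \<in> space M. q ^ m < Z \<omega>} \<le> prob (space M - (\<Union>k\<in>{1..m}. E k))"
    using E_events by (intro finite_measure_mono) auto
  ultimately show ?thesis by simp
qed

lemma sets_Collect_finitely_determined:
  fixes Y :: "'i \<Rightarrow> 'w \<Rightarrow> 'a::countable"
  assumes I: "finite I" and Y: "\<And>i. i \<in> I \<Longrightarrow> Y i \<in> M \<rightarrow>\<^sub>M count_space UNIV"
    and determined: "\<And>\<omega> \<omega>'. \<omega> \<in> space M \<Longrightarrow> \<omega>' \<in> space M \<Longrightarrow>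
      (\<And>i. i \<in> I \<Longrightarrow> Y i \<omega> = Y i \<omega>') \<Longrightarrow> P \<omega> \<longleftrightarrow> P \<omega>'"
  shows "{\<omega> \<in> space M. P \<omega>} \<in> sets M"
proof -
  \<comment> \<open>The restriction map to \<open>I\<close> takes countably many values, so it is measurable into the
    discrete space of its values, and the event is the preimage of its own image.\<close>
  define F where "F \<omega> = restrict (\<lambda>i. Y i \<omega>) I" for \<omega>
  have "F \<in> M \<rightarrow>\<^sub>M count_space (Pi\<^sub>E I (\<lambda>_. UNIV))"
  proof (subst measurable_count_space_eq_countable)
    show "countable (Pi\<^sub>E I (\<lambda>_. UNIV :: 'a set))" using I by (rule countable_PiE) auto
    have "F -` {v} \<inter> space M = {\<omega> \<in> space M. \<forall>i\<in>I. Y i \<omega> = v i}"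
      if "v \<in> Pi\<^sub>E I (\<lambda>_. UNIV)" for v
      using that by (auto simp: F_def fun_eq_iff PiE_def extensional_def)
    moreover have "{\<omega> \<in> space M. Y i \<omega> = v i} \<in> sets M" if "i \<in> I" for i v
      using measurable_sets[OF Y[OF that], of "{v i}"] by (simp add: vimage_def Int_def conj_commute)
    then have "{\<omega> \<in> space M. \<forall>i\<in>I. Y i \<omega> = v i} \<in> sets M" for v
      using I by (intro sets.sets_Collect_finite_All) auto
    ultimately show "F \<in> space M \<rightarrow> Pi\<^sub>E I (\<lambda>_. UNIV) \<and>
        (\<forall>v\<in>Pi\<^sub>E I (\<lambda>_. UNIV). F -` {v} \<inter> space M \<in> sets M)"
      by (auto simp: F_def)
  qed
  then have "F -` (F ` {\<omega> \<in> space M. P \<omega>}) \<inter> space M \<in> sets M"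
    by (rule measurable_sets) (auto simp: F_def)
  also have "F -` (F ` {\<omega> \<in> space M. P \<omega>}) \<inter> space M = {\<omega> \<in> space M. P \<omega>}"
  proof (intro equalityI subsetI)
    fix \<omega> assume "\<omega> \<in> F -` (F ` {\<omega> \<in> space M. P \<omega>}) \<inter> space M"
    then obtain \<omega>' where "\<omega> \<in> space M" "\<omega>' \<in> space M" "P \<omega>'" "F \<omega> = F \<omega>'" by auto
    moreover have "Y i \<omega> = Y i \<omega>'" if "i \<in> I" for i
      using fun_cong[OF \<open>F \<omega> = F \<omega>'\<close>, of i] that by (simp add: F_def)
    ultimately show "\<omega> \<in> {\<omega> \<in> space M. P \<omega>}"
      using determined[of \<omega> \<omega>'] by blast
  qed auto
  finally show ?thesis .
qed

locale padic_walks = prob_space \<Omega> for \<Omega> :: "'w measure" +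
  fixes b :: real and \<sigma> :: "nat \<Rightarrow> real" and X :: "nat \<Rightarrow> nat \<Rightarrow> 'w \<Rightarrow> rat"
  assumes b_pos: "0 < b"
    and \<sigma>_nonneg: "\<And>p. prime p \<Longrightarrow> 0 \<le> \<sigma> p"
    and \<sigma>_summable: "summable (\<lambda>p. if prime p then \<sigma> p else 0)"
    and X_measurable: "\<And>p i. prime p \<Longrightarrow> 1 \<le> i \<Longrightarrow> X p i \<in> \<Omega> \<rightarrow>\<^sub>M count_space UNIV"
    and law_norm: "\<And>p i k. prime p \<Longrightarrow> 1 \<le> i \<Longrightarrow> 1 \<le> k \<Longrightarrow>
        prob {\<omega> \<in> space \<Omega>. padic_norm p (X p i \<omega>) = real p ^ k}
          = (real p powr b - 1) * real p powr (- real k * b)"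
begin

lemma Dconst_nonneg: "prime p \<Longrightarrow> 0 \<le> Dconst b \<sigma> p"
  using Dconst_bounds(1)[of p b \<sigma>] prime_gt_1_nat b_pos \<sigma>_nonneg by simp

lemma step_count_le:
  assumes "prime p" and "0 \<le> t"
  shows "real (step_count b \<sigma> m p t) * real p powr (- real m * b) \<le> t * \<sigma> p"
proof -
  have "0 < real p" using assms(1) prime_gt_0_nat by simp
  have "0 \<le> Dconst b \<sigma> p * real p powr (real m * b) * t"
    using Dconst_nonneg[OF assms(1)] assms(2) by simp
  then have "real (step_count b \<sigma> m p t) \<le> Dconst b \<sigma> p * real p powr (real m * b) * t"
    unfolding step_count_def by linarith
  then have "real (step_count b \<sigma> m p t) * real p powr (- real m * b)
      \<le> Dconst b \<sigma> p * real p powr (real m * b) * t * real p powr (- real m * b)"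
    by (rule mult_right_mono) simp
  also have "\<dots> = Dconst b \<sigma> p * t"
    using \<open>0 < real p\<close> by (simp add: powr_add[symmetric])
  also have "\<dots> \<le> t * \<sigma> p"
    using Dconst_bounds(2)[of p b \<sigma>] prime_gt_1_nat[OF assms(1)] b_pos \<sigma>_nonneg[OF assms(1)] assms(2)
    by (simp add: mult.commute mult_left_mono)
  finally show ?thesis .
qed

lemma padic_norm_X_measurable:
  "prime p \<Longrightarrow> 1 \<le> i \<Longrightarrow> (\<lambda>\<omega>. padic_norm p (X p i \<omega>)) \<in> borel_measurable \<Omega>"
  by (rule measurable_compose[OF X_measurable]) auto

lemma large_step_event:
  "prime p \<Longrightarrow> 1 \<le> i \<Longrightarrow> {\<omega> \<in> space \<Omega>. real p ^ m < padic_norm p (X p i \<omega>)} \<in> events"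
  by (intro borel_measurable_less borel_measurable_const padic_norm_X_measurable)

lemma prob_large_step_le:
  assumes "prime p" and "1 \<le> i"
  shows "prob {\<omega> \<in> space \<Omega>. real p ^ m < padic_norm p (X p i \<omega>)} \<le> real p powr (- real m * b)"
  using assms prime_gt_1_nat by (intro prob_exceeds_power_le padic_norm_X_measurable law_norm) auto

definition big_jump :: "real \<Rightarrow> nat \<Rightarrow> nat \<Rightarrow> 'w set" where
  "big_jump T m p =
     {\<omega> \<in> space \<Omega>. \<exists>i\<in>{1..step_count b \<sigma> m p T}. real p ^ m < padic_norm p (X p i \<omega>)}"

lemma big_jump_eq_UN:
  "big_jump T m p =
     (\<Union>i\<in>{1..step_count b \<sigma> m p T}. {\<omega> \<in> space \<Omega>. real p ^ m < padic_norm p (X p i \<omega>)})"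
  unfolding big_jump_def by auto

lemma big_jump_event: "prime p \<Longrightarrow> big_jump T m p \<in> events"
  unfolding big_jump_eq_UN by (intro sets.finite_UN large_step_event) auto

lemma prob_big_jump_le:
  assumes "prime p" and "0 \<le> T"
  shows "prob (big_jump T m p) \<le> T * \<sigma> p"
proof -
  let ?n = "step_count b \<sigma> m p T"
  have "prob (big_jump T m p)
      \<le> (\<Sum>i\<in>{1..?n}. prob {\<omega> \<in> space \<Omega>. real p ^ m < padic_norm p (X p i \<omega>)})"
    unfolding big_jump_eq_UN using large_step_event[OF assms(1)] by (intro measure_UNION_le) auto
  also have "\<dots> \<le> (\<Sum>i\<in>{1..?n}. real p powr (- real m * b))"
    using prob_large_step_le[OF assms(1)] by (intro sum_mono) auto
  also have "\<dots> = real ?n * real p powr (- real m * b)"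
    by simp
  also have "\<dots> \<le> T * \<sigma> p"
    by (rule step_count_le[OF assms])
  finally show ?thesis .
qed

lemma scaled_path_cong:
  assumes "prime p" and "s \<le> T"
    and "\<And>i. i \<in> {1..step_count b \<sigma> m p T} \<Longrightarrow> X p i \<omega> = X p i \<omega>'"
  shows "scaled_path b \<sigma> X m \<omega> p s = scaled_path b \<sigma> X m \<omega>' p s"
proof -
  have "step_count b \<sigma> m p s \<le> step_count b \<sigma> m p T"
    using step_count_mono[OF Dconst_nonneg[OF assms(1)] assms(2)] .
  then have "walk (X p) (step_count b \<sigma> m p s) \<omega> = walk (X p) (step_count b \<sigma> m p s) \<omega>'"
    using assms(3) by (intro walk_cong) auto
  then show ?thesis unfolding scaled_path_eq_walk by simp
qed

lemma sets_Collect_SUP_scaled_path: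
  assumes "prime p"
  shows "{\<omega> \<in> space \<Omega>. P (SUP s\<in>{0..T}. padic_norm p (scaled_path b \<sigma> X m \<omega> p s))} \<in> events"
proof (rule sets_Collect_finitely_determined[of "{1..step_count b \<sigma> m p T}" "X p"])
  fix \<omega> \<omega>' assume same_steps: "\<And>i. i \<in> {1..step_count b \<sigma> m p T} \<Longrightarrow> X p i \<omega> = X p i \<omega>'"
  have "padic_norm p (scaled_path b \<sigma> X m \<omega> p s) = padic_norm p (scaled_path b \<sigma> X m \<omega>' p s)"
    if "s \<in> {0..T}" for s
  proof -
    have "s \<le> T" using that by simp
    then show ?thesis using scaled_path_cong[OF assms _ same_steps, of s] by simp
  qed
  then have "(SUP s\<in>{0..T}. padic_norm p (scaled_path b \<sigma> X m \<omega> p s))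
           = (SUP s\<in>{0..T}. padic_norm p (scaled_path b \<sigma> X m \<omega>' p s))"
    by (rule SUP_cong[OF refl])
  then show "P (SUP s\<in>{0..T}. padic_norm p (scaled_path b \<sigma> X m \<omega> p s))
         \<longleftrightarrow> P (SUP s\<in>{0..T}. padic_norm p (scaled_path b \<sigma> X m \<omega>' p s))"
    by simp
qed (use X_measurable[OF assms] in auto)

lemma sets_Lambda_event:
  "{\<omega> \<in> space \<Omega>. Lambda_event T M lam (scaled_path b \<sigma> X m \<omega>)} \<in> events"
  unfolding Lambda_event_def
proof (intro sets.sets_Collect_countable_All)
  fix p
  show "{\<omega> \<in> space \<Omega>. prime p \<and> M \<le> p \<longrightarrow>
      (SUP s\<in>{0..T}. padic_norm p (scaled_path b \<sigma> X m \<omega> p s)) / real p < lam} \<in> events"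
  proof (cases "prime p")
    case True
    then show ?thesis
      by (rule sets_Collect_SUP_scaled_path[where P = "\<lambda>x. prime p \<and> M \<le> p \<longrightarrow> x / real p < lam"])
  qed simp
qed

lemma Lambda_event_if_no_big_jump:
  assumes "0 \<le> T" and "1 < real M * lam" and "\<omega> \<in> space \<Omega>"
    and no_jump: "\<And>p. prime p \<Longrightarrow> M \<le> p \<Longrightarrow> \<omega> \<notin> big_jump T m p"
  shows "Lambda_event T M lam (scaled_path b \<sigma> X m \<omega>)"
  unfolding Lambda_event_def
proof (intro allI impI)
  fix p assume p: "prime p \<and> M \<le> p"
  have "padic_norm p (scaled_path b \<sigma> X m \<omega> p s) \<le> 1" if "s \<in> {0..T}" for s
  proof -
    have "step_count b \<sigma> m p s \<le> step_count b \<sigma> m p T"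
      using step_count_mono Dconst_nonneg p that by auto
    moreover have "\<omega> \<notin> big_jump T m p" using no_jump p by blast
    ultimately have "padic_norm p (X p i \<omega>) \<le> real p ^ m" if "i \<in> {1..step_count b \<sigma> m p s}" for i
      using \<open>\<omega> \<in> space \<Omega>\<close> that unfolding big_jump_def by (auto simp: not_less)
    then show ?thesis
      unfolding scaled_path_eq_walk using p by (intro padic_norm_scaled_walk_le_one) auto
  qed
  then have "(SUP s\<in>{0..T}. padic_norm p (scaled_path b \<sigma> X m \<omega> p s)) \<le> 1"
    using \<open>0 \<le> T\<close> by (intro cSUP_least) auto
  moreover have "0 < lam"
    using assms(2) mult_nonneg_nonpos[of "real M" lam] by (cases "0 < lam") auto
  then have "real M * lam \<le> real p * lam" using p by simp
  then have "1 < real p * lam" using assms(2) by linarith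
  moreover have "0 < real p" using p prime_gt_0_nat by simp
  ultimately show "(SUP s\<in>{0..T}. padic_norm p (scaled_path b \<sigma> X m \<omega> p s)) / real p < lam"
    by (simp add: divide_less_eq mult.commute)
qed

lemma prob_Lambda_event_ge:
  assumes "0 \<le> T" and "1 < real M * lam"
  shows "1 - T * (\<Sum>j. if prime (j + M) then \<sigma> (j + M) else 0)
    \<le> prob {\<omega> \<in> space \<Omega>. Lambda_event T M lam (scaled_path b \<sigma> X m \<omega>)}"
proof -
  define \<tau> where "\<tau> j = (if prime (j + M) then \<sigma> (j + M) else 0)" for j
  define A where "A j = (if prime (j + M) then big_jump T m (j + M) else {})" for j
  have A_events: "A j \<in> events" for j
    unfolding A_def using big_jump_event by simp
  have prob_A: "prob (A j) \<le> T * \<tau> j" for j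
    unfolding A_def \<tau>_def using prob_big_jump_le[OF _ assms(1)] by simp
  have summable_T\<tau>: "summable (\<lambda>j. T * \<tau> j)"
    unfolding \<tau>_def using summable_ignore_initial_segment[OF \<sigma>_summable, of M]
    by (intro summable_mult) simp
  then have summable_A: "summable (\<lambda>j. prob (A j))"
    by (rule summable_comparison_test') (use prob_A in auto)
  have "prob (\<Union>j. A j) \<le> (\<Sum>j. prob (A j))"
    using A_events summable_A by (intro finite_measure_subadditive_countably) auto
  also have "\<dots> \<le> (\<Sum>j. T * \<tau> j)"
    using summable_A summable_T\<tau> prob_A by (intro suminf_le) auto
  also have "\<dots> = T * (\<Sum>j. \<tau> j)"
    using summable_ignore_initial_segment[OF \<sigma>_summable, of M]
    unfolding \<tau>_def by (rule suminf_mult)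
  finally have prob_bad: "prob (\<Union>j. A j) \<le> T * (\<Sum>j. \<tau> j)" .
  have "space \<Omega> - (\<Union>j. A j) \<subseteq> {\<omega> \<in> space \<Omega>. Lambda_event T M lam (scaled_path b \<sigma> X m \<omega>)}"
  proof safe
    fix \<omega> assume \<omega>: "\<omega> \<in> space \<Omega>" "\<omega> \<notin> (\<Union>j. A j)"
    have "\<omega> \<notin> big_jump T m p" if "prime p" "M \<le> p" for p
    proof -
      have "\<omega> \<notin> A (p - M)" using \<omega>(2) by blast
      then show ?thesis using that unfolding A_def by simp
    qed
    then show "Lambda_event T M lam (scaled_path b \<sigma> X m \<omega>)"
      using Lambda_event_if_no_big_jump[OF assms \<omega>(1)] by blast
  qed
  then have "prob (space \<Omega> - (\<Union>j. A j))
      \<le> prob {\<omega> \<in> space \<Omega>. Lambda_event T M lam (scaled_path b \<sigma> X m \<omega>)}"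
    using sets_Lambda_event by (intro finite_measure_mono) auto
  moreover have "prob (space \<Omega> - (\<Union>j. A j)) = 1 - prob (\<Union>j. A j)"
    using A_events by (intro prob_compl) auto
  ultimately show ?thesis using prob_bad unfolding \<tau>_def by linarith
qed

end

theorem lemma3:
  fixes b :: real and \<sigma> :: "nat \<Rightarrow> real"
    and \<Omega> :: "'w measure" and X :: "nat \<Rightarrow> nat \<Rightarrow> 'w \<Rightarrow> rat"
  assumes b_pos: "b > 0"
    and \<sigma>_nonneg: "\<And>p. prime p \<Longrightarrow> \<sigma> p \<ge> 0"
    and \<sigma>_summable: "\<sigma> summable_on {p. prime p}"
    and prob: "prob_space \<Omega>"
    and indep: "prob_space.indep_vars \<Omega> (\<lambda>_. count_space UNIV) (\<lambda>(p, i). X p i)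
                  {(p, i). prime p \<and> i \<ge> 1}"
    and vals: "\<And>p i \<omega>. prime p \<Longrightarrow> i \<ge> 1 \<Longrightarrow> \<omega> \<in> space \<Omega> \<Longrightarrow> X p i \<omega> \<in> Gp p"
    and law_norm: "\<And>p i k. prime p \<Longrightarrow> i \<ge> 1 \<Longrightarrow> k \<ge> 1 \<Longrightarrow>
        measure \<Omega> {\<omega> \<in> space \<Omega>. padic_norm p (X p i \<omega>) = real p ^ k}
          = (real p powr b - 1) * real p powr (- real k * b)"
    and law_unif: "\<And>p i k x. prime p \<Longrightarrow> i \<ge> 1 \<Longrightarrow> k \<ge> 1 \<Longrightarrow> x \<in> Gp p \<Longrightarrow>
        padic_norm p x = real p ^ k \<Longrightarrow>
        measure \<Omega> {\<omega> \<in> space \<Omega>. X p i \<omega> = x}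
          = measure \<Omega> {\<omega> \<in> space \<Omega>. padic_norm p (X p i \<omega>) = real p ^ k}
            / real (card {y \<in> Gp p. padic_norm p y = real p ^ k})"
    and T_pos: "T > 0" and lam_pos: "lam > 0" and \<epsilon>_pos: "\<epsilon> > 0"
  shows "\<exists>M::nat. liminf (\<lambda>m. ereal (measure \<Omega>
            {\<omega> \<in> space \<Omega>. Lambda_event T M lam (scaled_path b \<sigma> X m \<omega>)}))
          > ereal (1 - \<epsilon>)"
proof -
  let ?\<sigma>\<^sub>P = "\<lambda>p. if prime p then \<sigma> p else 0"
  have "?\<sigma>\<^sub>P summable_on UNIV"
    using \<sigma>_summable by (subst summable_on_cong_neutral[where T = "{p. prime p}" and g = \<sigma>]) auto
  then have summable_\<sigma>\<^sub>P: "summable ?\<sigma>\<^sub>P" by (rule summable_on_imp_summable)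
  have "X p i \<in> \<Omega> \<rightarrow>\<^sub>M count_space UNIV" if "prime p" "i \<ge> 1" for p i
    using indep that by (auto simp: prob_space.indep_vars_def[OF prob])
  then interpret padic_walks \<Omega> b \<sigma> X
    using prob b_pos \<sigma>_nonneg summable_\<sigma>\<^sub>P law_norm
    by (intro padic_walks.intro padic_walks_axioms.intro) auto
  obtain M0 where M0: "\<forall>M\<ge>M0. norm (\<Sum>j. ?\<sigma>\<^sub>P (j + M)) < \<epsilon> / (2 * T)"
    using suminf_exist_split[OF _ summable_\<sigma>\<^sub>P, of "\<epsilon> / (2 * T)"] \<epsilon>_pos T_pos by auto
  define M where "M = max M0 (nat \<lceil>1 / lam\<rceil> + 1)"
  have "1 / lam < real M" unfolding M_def by linarith
  then have "1 < real M * lam" using lam_pos by (simp add: field_simps)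
  moreover have "T * (\<Sum>j. ?\<sigma>\<^sub>P (j + M)) < \<epsilon> / 2"
    using M0[rule_format, of M] T_pos by (simp add: M_def abs_less_iff field_simps)
  ultimately have "1 - \<epsilon> / 2 \<le> prob {\<omega> \<in> space \<Omega>. Lambda_event T M lam (scaled_path b \<sigma> X m \<omega>)}"
    for m using prob_Lambda_event_ge[of T M lam m] T_pos by linarith
  then have "ereal (1 - \<epsilon> / 2)
      \<le> liminf (\<lambda>m. ereal (prob {\<omega> \<in> space \<Omega>. Lambda_event T M lam (scaled_path b \<sigma> X m \<omega>)}))"
    by (intro Liminf_bounded) auto
  moreover have "ereal (1 - \<epsilon>) < ereal (1 - \<epsilon> / 2)" using \<epsilon>_pos by simp
  ultimately show ?thesis by (intro exI[of _ M]) (meson less_le_trans)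
qed

end
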